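(* Let $k\in\{0,1,2,\dots\}$ and define the polynomial \[ V_k(x)=2\cdot\frac{(2k+2)!}{\left(-\tfrac12\right)_{2k+2}}\sum_{\ell=0}^{2k+1}\frac{(-1)^\ell\,\left(\ell+\tfrac12\right)_{2k+1-\ell}}{(2k+1-\ell)!\,(\ell+1)}\,x^{\ell+1}, \] and the function \[ \psi_k(x)=-\frac{(2k+2)!}{\pi\left(-\tfrac12\right)_{2k+2}}\,x^{1/2}(1-x)^{2k+1/2},\qquad x\in[0,1]. \] Then $\psi_k(x)>0$ for $x\in(0,1)$, $\int_0^1\psi_k(s)\,ds=1$, and \[ 2\,\mathrm{PV}\!\int_0^1\frac{\psi_k(s)}{x-s}\,ds=V_k'(x)\qquad\text{for all }x\in(0,1), \] where $\mathrm{PV}$ denotes the Cauchy principal value integral. (These are the variational (Euler–Lagrange) conditions on the support identifying $\psi_k(x)\,dx$ as the equilibrium measure of $V_k$, i.e.\ the limiting mean eigenvalue density of the unitary ensemble $\frac{1}{Z_n}e^{-n\,\mathrm{tr}\,V_k(M)}dM$, which is supported on $[0,1]$ and vanishes like $(1-x)^{2k+1/2}$ at the right endpoint.)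
   Context: $(a)_m=a(a+1)\cdots(a+m-1)$ denotes the Pochhammer symbol, with $(a)_0=1$. The equilibrium measure $\mu_V$ of an external field $V$ is the unique minimizer of $I_V(\mu)=\iint\log\frac{1}{|x-y|}d\mu(x)d\mu(y)+\int V\,d\mu$ over Borel probability measures $\mu$ on $\mathbb R$; on its support it satisfies $2\int\log|x-y|\,d\mu(y)-V(x)=\text{const}$, whose derivative on the interior of the support is the principal value equation above. *)

theory Defs
  imports "HOL-Analysis.Analysis"
begin

definition V :: "nat \<Rightarrow> real \<Rightarrow> real" where
  "V k x = 2 * (fact (2*k+2) / pochhammer (-1/2) (2*k+2)) *
     (\<Sum>l = 0..2*k+1. (-1)^l * pochhammer (real l + 1/2) (2*k+1-l)
        / (fact (2*k+1-l) * (real l + 1)) * x^(l+1))"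

definition psi :: "nat \<Rightarrow> real \<Rightarrow> real" where
  "psi k x = - (fact (2*k+2) / (pi * pochhammer (-1/2) (2*k+2)))
     * x powr (1/2) * (1 - x) powr (real (2*k) + 1/2)"

definition has_pv_integral :: "(real \<Rightarrow> real) \<Rightarrow> real \<Rightarrow> real \<Rightarrow> real \<Rightarrow> real \<Rightarrow> bool" where
  "has_pv_integral f a b c I \<longleftrightarrow>
     ((\<lambda>e. integral {a..c-e} f + integral {c+e..b} f) \<longlongrightarrow> I) (at_right 0)"

end

theory Submission
  imports Defs
begin

(* With u(s) = sqrt(s(1-s)) (root_weight) and f_n(s) = (1-s)^n u(s) (jacobi_weight), the density
   is psi_k = c_k f_{2k} on [0,1] for an explicit constant c_k > 0 (psi_scale).  The theorem then
   reduces to two exact integrals of f_n, both computed through explicit primitives built by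
   induction on n:

   (1) the mass  int_0^1 f_n = -pi (-1/2)_{n+2}/(n+2)!  (jacobi_mass), via integration by parts
       of s(1-s) f_n, which gives the recursion m_{n+1} = (n+3/2)/(n+3) m_n;
   (2) the principal value  PV int_0^1 f_n(s)/(x-s) ds = -pi T_n(x)  (pv_poly), where
       T_{n+1} = (1-x) T_n - m_n/pi.  The integrand minus its singular term
       x(1-x)^{n+1}/((x-s) u(s)) has a primitive continuous on [0,1]; the singular term has a
       logarithmic primitive whose symmetric jump at s = x vanishes, so it contributes nothing.

   A general lemma converts a primitive with a convergent symmetric jump into a principal value.
   Finally V_k' = -2 pi c_k T_{2k}, so twice the principal value of psi_k is V_k'. *)

definition root_weight :: "real \<Rightarrow> real" where
  "root_weight s = sqrt s * sqrt (1 - s)"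

lemma root_weight_pos: "0 < s \<Longrightarrow> s < 1 \<Longrightarrow> root_weight s > 0"
  by (simp add: root_weight_def)

lemma root_weight_square: "0 \<le> s \<Longrightarrow> s \<le> 1 \<Longrightarrow> root_weight s * root_weight s = s * (1 - s)"
  by (simp add: root_weight_def real_sqrt_mult[symmetric])

lemma root_weight_endpoints: "root_weight 0 = 0" "root_weight 1 = 0"
  by (simp_all add: root_weight_def)

lemma continuous_on_root_weight: "continuous_on A root_weight"
  unfolding root_weight_def[abs_def] by (intro continuous_intros)

lemma DERIV_root_weight:
  assumes "0 < s" "s < 1"
  shows "(root_weight has_real_derivative (1 - 2 * s) / (2 * root_weight s)) (at s)"
proof -
  have "((\<lambda>s. sqrt s * sqrt (1 - s)) has_real_derivative
      inverse (sqrt s) / 2 * sqrt (1 - s) + inverse (sqrt (1 - s)) / 2 * (0 - 1) * sqrt s) (at s)"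
    using assms by (intro DERIV_mult DERIV_real_sqrt DERIV_chain2[OF DERIV_real_sqrt] derivative_intros) auto
  moreover have "inverse (sqrt s) / 2 * sqrt (1 - s) + inverse (sqrt (1 - s)) / 2 * (0 - 1) * sqrt s
      = (1 - 2 * s) / (2 * root_weight s)"
    using assms by (simp add: root_weight_def field_simps)
  ultimately show ?thesis unfolding root_weight_def[abs_def] by simp
qed

text \<open>arcsin(2s-1) is a primitive of 1/u; it supplies the non-algebraic part of all primitives.\<close>
lemma DERIV_arcsin_affine:
  assumes "0 < s" "s < 1"
  shows "((\<lambda>s. arcsin (2 * s - 1)) has_real_derivative 1 / root_weight s) (at s)"
proof -
  have "((\<lambda>s. arcsin (2 * s - 1)) has_real_derivative
      inverse (sqrt (1 - (2 * s - 1)\<^sup>2)) * (2 * 1 - 0)) (at s)"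
    using assms by (intro DERIV_chain2[OF DERIV_arcsin] derivative_intros) auto
  moreover have "sqrt (1 - (2 * s - 1)\<^sup>2) = 2 * root_weight s"
  proof -
    have "1 - (2 * s - 1)\<^sup>2 = (2 * root_weight s)\<^sup>2"
      using root_weight_square[of s] assms by (simp add: power2_eq_square algebra_simps)
    moreover have "root_weight s \<ge> 0" using root_weight_pos[OF assms] by simp
    ultimately show ?thesis by (simp only: real_sqrt_abs)
  qed
  ultimately show ?thesis by (simp add: divide_simps)
qed

definition jacobi_weight :: "nat \<Rightarrow> real \<Rightarrow> real" where
  "jacobi_weight n s = (1 - s) ^ n * root_weight s"

lemma jacobi_weight_Suc: "jacobi_weight (Suc n) s = (1 - s) * jacobi_weight n s"
  by (simp add: jacobi_weight_def)

lemma DERIV_power_one_minus: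
  assumes "s < 1"
  shows "((\<lambda>s. (1 - s) ^ n) has_real_derivative - real n * (1 - s) ^ n / (1 - s)) (at s)"
proof -
  have "((\<lambda>s. (1 - s) ^ n) has_real_derivative real n * (1 - s) ^ (n - 1) * (0 - 1)) (at s)"
    by (auto intro!: derivative_eq_intros)
  moreover have "real n * (1 - s) ^ (n - 1) = real n * (1 - s) ^ n / (1 - s)"
    using assms by (cases n) auto
  ultimately show ?thesis by simp
qed

lemma DERIV_jacobi_weight:
  assumes "0 < s" "s < 1"
  shows "(jacobi_weight n has_real_derivative
      (1/2 - (real n + 1) * s) / (s * (1 - s)) * jacobi_weight n s) (at s)"
proof -
  have "(jacobi_weight n has_real_derivative
      - real n * (1 - s) ^ n / (1 - s) * root_weight s + (1 - 2 * s) / (2 * root_weight s) * (1 - s) ^ n) (at s)"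
    unfolding jacobi_weight_def[abs_def] using assms
    by (intro DERIV_mult DERIV_power_one_minus DERIV_root_weight)
  moreover have "- real n * (1 - s) ^ n / (1 - s) * root_weight s + (1 - 2 * s) / (2 * root_weight s) * (1 - s) ^ n
      = (1/2 - (real n + 1) * s) / (s * (1 - s)) * jacobi_weight n s"
  proof -
    have u: "root_weight s > 0" "root_weight s * root_weight s = s * (1 - s)"
      using assms root_weight_pos root_weight_square by auto
    have "(1 - 2 * s) / (2 * root_weight s)
        = (1 - 2 * s) / (2 * (root_weight s * root_weight s)) * root_weight s"
      using u(1) by (simp add: field_simps)
    also have "\<dots> = (1 - 2 * s) / (2 * (s * (1 - s))) * root_weight s"
      by (simp only: u(2))
    finally have half: "(1 - 2 * s) / (2 * root_weight s) = (1 - 2 * s) / (2 * (s * (1 - s))) * root_weight s" .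
    have "- real n * p / t * u + (1 - 2 * s) / (2 * (s * t)) * u * p
        = (1/2 - (real n + 1) * s) / (s * t) * (p * u)" if "s \<noteq> 0" "t \<noteq> 0" for p t u
      using that by (simp add: field_simps)
    from this[of "1 - s" "(1 - s) ^ n" "root_weight s"] assms show ?thesis
      unfolding jacobi_weight_def half by simp
  qed
  ultimately show ?thesis by simp
qed
definition jacobi_mass :: "nat \<Rightarrow> real" where
  "jacobi_mass n = - pi * pochhammer (-1/2) (n + 2) / fact (n + 2)"

lemma jacobi_mass_Suc: "jacobi_mass (Suc n) = (real n + 3/2) / (real n + 3) * jacobi_mass n"
  by (simp add: jacobi_mass_def pochhammer_Suc field_simps)

text \<open>For n = 0 it is elementary; the step
  integrates (s(1-s) f_n)' = (3/2 - (n+3) s) f_n, which expresses f_{n+1} = (1-s) f_n through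
  f_n and an exact derivative.\<close>
lemma jacobi_weight_primitive:
  "\<exists>\<Phi>. continuous_on {0..1} \<Phi>
      \<and> (\<forall>s\<in>{0<..<1}. (\<Phi> has_real_derivative jacobi_weight n s) (at s))
      \<and> \<Phi> 1 - \<Phi> 0 = jacobi_mass n"
proof (induction n)
  case 0
  define \<Phi> where "\<Phi> s = (2 * s - 1) / 4 * root_weight s + arcsin (2 * s - 1) / 8" for s
  have "continuous_on {0..1} \<Phi>"
    unfolding \<Phi>_def[abs_def] by (intro continuous_intros continuous_on_root_weight) auto
  moreover have "(\<Phi> has_real_derivative jacobi_weight 0 s) (at s)" if s: "s \<in> {0<..<1}" for s
  proof -
    have "(\<Phi> has_real_derivative (2 * 1 - 0) / 4 * root_weight s
        + (1 - 2 * s) / (2 * root_weight s) * ((2 * s - 1) / 4) + 1 / root_weight s / 8) (at s)"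
      unfolding \<Phi>_def[abs_def] using s
      by (intro derivative_intros DERIV_mult DERIV_root_weight DERIV_arcsin_affine DERIV_cdivide) auto
    moreover have "(2 * 1 - 0) / 4 * root_weight s
        + (1 - 2 * s) / (2 * root_weight s) * ((2 * s - 1) / 4) + 1 / root_weight s / 8 = root_weight s"
    proof -
      have "root_weight s > 0" "root_weight s * root_weight s = s * (1 - s)"
        using s root_weight_pos root_weight_square by auto
      then show ?thesis by (simp add: field_simps)
    qed
    ultimately show ?thesis by (simp add: jacobi_weight_def)
  qed
  moreover have "\<Phi> 1 - \<Phi> 0 = jacobi_mass 0"
    by (simp add: \<Phi>_def root_weight_endpoints jacobi_mass_def numeral_2_eq_2 pochhammer_Suc)
  ultimately show ?case by blast
next
  case (Suc n)
  then obtain \<Phi> where cont: "continuous_on {0..1} \<Phi>"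
    and deriv: "\<forall>s\<in>{0<..<1}. (\<Phi> has_real_derivative jacobi_weight n s) (at s)"
    and mass: "\<Phi> 1 - \<Phi> 0 = jacobi_mass n" by blast
  define \<Psi> where "\<Psi> s = (s * (1 - s) * jacobi_weight n s + (real n + 3/2) * \<Phi> s) / (real n + 3)" for s
  have "continuous_on {0..1} \<Psi>"
    unfolding \<Psi>_def[abs_def] jacobi_weight_def
    by (intro continuous_intros continuous_on_root_weight cont) auto
  moreover have "(\<Psi> has_real_derivative jacobi_weight (Suc n) s) (at s)" if s: "s \<in> {0<..<1}" for s
  proof -
    have "(\<Psi> has_real_derivative ((1 * (1 - s) + (0 - 1) * s) * jacobi_weight n s
        + (1/2 - (real n + 1) * s) / (s * (1 - s)) * jacobi_weight n s * (s * (1 - s))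
        + (real n + 3/2) * jacobi_weight n s) / (real n + 3)) (at s)"
      unfolding \<Psi>_def[abs_def] using s deriv
      by (intro derivative_intros DERIV_mult DERIV_jacobi_weight DERIV_cdivide DERIV_cmult) auto
    moreover have "((1 * (1 - s) + (0 - 1) * s) * jacobi_weight n s
        + (1/2 - (real n + 1) * s) / (s * (1 - s)) * jacobi_weight n s * (s * (1 - s))
        + (real n + 3/2) * jacobi_weight n s) / (real n + 3) = jacobi_weight (Suc n) s"
    proof -
      have "s * (1 - s) \<noteq> 0" using s by auto
      then have "(1/2 - (real n + 1) * s) / (s * (1 - s)) * jacobi_weight n s * (s * (1 - s))
          = (1/2 - (real n + 1) * s) * jacobi_weight n s" by simp
      moreover have "real n + 3 \<noteq> 0" by linarith
      ultimately show ?thesis by (simp add: jacobi_weight_Suc field_simps)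
    qed
    ultimately show ?thesis by simp
  qed
  moreover have "\<Psi> 1 - \<Psi> 0 = jacobi_mass (Suc n)"
  proof -
    have "\<Psi> 1 - \<Psi> 0 = (real n + 3/2) / (real n + 3) * (\<Phi> 1 - \<Phi> 0)"
      by (simp add: \<Psi>_def diff_divide_distrib[symmetric] right_diff_distrib)
    then show ?thesis using mass by (simp add: jacobi_mass_Suc)
  qed
  ultimately show ?case by blast
qed

lemma jacobi_weight_integral: "(jacobi_weight n has_integral jacobi_mass n) {0..1}"
proof -
  obtain \<Phi> where cont: "continuous_on {0..1} \<Phi>"
    and deriv: "\<forall>s\<in>{0<..<1}. (\<Phi> has_real_derivative jacobi_weight n s) (at s)"
    and mass: "\<Phi> 1 - \<Phi> 0 = jacobi_mass n"
    using jacobi_weight_primitive by blast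
  have "(jacobi_weight n has_integral \<Phi> 1 - \<Phi> 0) {0..1}"
    using cont deriv
    by (intro fundamental_theorem_of_calculus_interior)
       (auto simp: has_real_derivative_iff_has_vector_derivative)
  then show ?thesis using mass by simp
qed

text \<open>The polynomial T_n(x) = sum_{l=0}^{n+1} (-1)^l (l+1/2)_{n+1-l}/(n+1-l)! x^l, so that
  PV int_0^1 f_n(s)/(x-s) ds = -pi T_n(x).\<close>

definition pv_coeff :: "nat \<Rightarrow> nat \<Rightarrow> real" where
  "pv_coeff n l = (-1) ^ l * pochhammer (real l + 1/2) (n + 1 - l) / fact (n + 1 - l)"

definition pv_poly :: "nat \<Rightarrow> real \<Rightarrow> real" where
  "pv_poly n x = (\<Sum>l = 0..n+1. pv_coeff n l * x ^ l)"

text \<open>The coefficients of T_{n+1} arise from those of T_n by multiplication with 1-x: a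
  Pascal-type rule in the interior, a sign change at the top degree, and a correction by the
  mass m_n at degree zero.\<close>
lemma pv_coeff_Suc_Suc:
  assumes "j \<le> n"
  shows "pv_coeff (Suc n) (Suc j) = pv_coeff n (Suc j) - pv_coeff n j"
proof -
  obtain m where n: "n = j + m" using assms le_Suc_ex by blast
  define A where "A = pochhammer (real j + 3/2) m"
  have "pochhammer (real (Suc j) + 1/2) (Suc m) = A * (real j + 1/2 + (real m + 1))"
    by (simp add: A_def pochhammer_Suc add.commute add.left_commute)
  then have lhs: "pv_coeff (Suc n) (Suc j) = (-1) ^ Suc j * (A * (real j + 1/2 + (real m + 1))) / fact (Suc m)"
    unfolding pv_coeff_def n by (simp add: Suc_diff_le)
  have "pochhammer (real (Suc j) + 1/2) m = A"
    by (simp add: A_def add.commute add.left_commute)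
  then have first: "pv_coeff n (Suc j) = (-1) ^ Suc j * A / fact m"
    unfolding pv_coeff_def n by simp
  have "pochhammer (real j + 1/2) (Suc m) = (real j + 1/2) * A"
    by (simp add: A_def pochhammer_rec add.commute add.left_commute)
  then have second: "pv_coeff n j = (-1) ^ j * ((real j + 1/2) * A) / fact (Suc m)"
    unfolding pv_coeff_def n by (simp add: Suc_diff_le)
  have "\<sigma> * (A * (real j + 1/2 + M)) / (M * F) = \<sigma> * A / F - (- \<sigma>) * ((real j + 1/2) * A) / (M * F)"
    if "F > 0" "M > 0" for \<sigma> F M :: real
    using that by (simp add: field_simps)
  from this[of "fact m" "1 + real m" "(-1) ^ Suc j"] show ?thesis
    unfolding lhs first second by (simp del: fact_Suc add: fact_Suc[of m])
qed

lemma pv_coeff_top: "pv_coeff (Suc n) (Suc (Suc n)) = - pv_coeff n (Suc n)"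
  by (simp add: pv_coeff_def)

lemma pv_coeff_zero: "pv_coeff (Suc n) 0 = pv_coeff n 0 - jacobi_mass n / pi"
proof -
  define P where "P = pochhammer (1/2::real) (Suc n)"
  have "pochhammer (-1/2::real) (Suc (Suc n)) = (-1/2) * pochhammer (-1/2 + 1) (Suc n)"
    by (rule pochhammer_rec)
  then have mass: "jacobi_mass n / pi = P / (2 * fact (Suc (Suc n)))"
    by (simp add: jacobi_mass_def P_def numeral_2_eq_2)
  have next_coeff: "pv_coeff (Suc n) 0 = P * (real n + 3/2) / fact (Suc (Suc n))"
    by (simp add: pv_coeff_def P_def pochhammer_Suc[of "1/2::real" "Suc n"] add.commute)
  have coeff: "pv_coeff n 0 = P / fact (Suc n)" by (simp add: pv_coeff_def P_def)
  have "P * (N + 3/2 - 2) / (N * F) = P / F - P / (2 * (N * F))" if "F > 0" "N > 0" for F N :: real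
    using that by (simp add: field_simps)
  from this[of "fact (Suc n)" "real n + 2"] show ?thesis
    unfolding mass next_coeff coeff by (simp del: fact_Suc add: fact_Suc[of "Suc n"] algebra_simps)
qed

lemma pv_poly_Suc: "pv_poly (Suc n) x = (1 - x) * pv_poly n x - jacobi_mass n / pi"
proof -
  let ?a = "pv_coeff n"
  have "pv_poly (Suc n) x = (\<Sum>l = 0..Suc (Suc n). pv_coeff (Suc n) l * x ^ l)"
    by (simp add: pv_poly_def)
  also have "\<dots> = pv_coeff (Suc n) 0 + (\<Sum>j = 0..Suc n. pv_coeff (Suc n) (Suc j) * x ^ Suc j)"
    by (rule trans[OF sum.atLeast0_atMost_Suc_shift]) simp
  also have "\<dots> = pv_coeff (Suc n) 0 + (\<Sum>j = 0..n. pv_coeff (Suc n) (Suc j) * x ^ Suc j)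
        + pv_coeff (Suc n) (Suc (Suc n)) * x ^ Suc (Suc n)"
    by (simp add: sum.atLeast0_atMost_Suc)
  also have "(\<Sum>j = 0..n. pv_coeff (Suc n) (Suc j) * x ^ Suc j)
      = (\<Sum>j = 0..n. ?a (Suc j) * x ^ Suc j) - (\<Sum>j = 0..n. ?a j * x ^ Suc j)"
    by (simp add: pv_coeff_Suc_Suc left_diff_distrib sum_subtractf)
  finally have next_poly: "pv_poly (Suc n) x
      = pv_coeff (Suc n) 0 + (\<Sum>j = 0..n. ?a (Suc j) * x ^ Suc j)
        - (\<Sum>j = 0..n. ?a j * x ^ Suc j) - ?a (Suc n) * x ^ Suc (Suc n)"
    by (simp add: pv_coeff_top)
  have "pv_poly n x = (\<Sum>l = 0..Suc n. ?a l * x ^ l)" by (simp add: pv_poly_def)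
  also have "\<dots> = ?a 0 + (\<Sum>j = 0..n. ?a (Suc j) * x ^ Suc j)"
    by (rule trans[OF sum.atLeast0_atMost_Suc_shift]) simp
  finally have poly: "pv_poly n x = ?a 0 + (\<Sum>j = 0..n. ?a (Suc j) * x ^ Suc j)" .
  have "x * pv_poly n x = (\<Sum>l = 0..Suc n. ?a l * x ^ Suc l)"
    unfolding pv_poly_def by (simp add: sum_distrib_left algebra_simps)
  then have x_poly: "x * pv_poly n x = (\<Sum>j = 0..n. ?a j * x ^ Suc j) + ?a (Suc n) * x ^ Suc (Suc n)"
    by (simp add: sum.atLeast0_atMost_Suc)
  show ?thesis
    unfolding next_poly pv_coeff_zero left_diff_distrib x_poly by (simp add: poly)
qed

text \<open>The regular part of the Cauchy integrand f_n(s)/(x-s): subtracting the singular term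
  x(1-x)^{n+1}/((x-s) u(s)), which has the same pole at s = x, leaves a function with a
  primitive continuous on all of [0,1], whose increment is -pi T_n(x).\<close>

definition regular_part :: "nat \<Rightarrow> real \<Rightarrow> real \<Rightarrow> real" where
  "regular_part n x s = jacobi_weight n s / (x - s) - x * (1 - x) ^ (n + 1) / ((x - s) * root_weight s)"

lemma regular_part_primitive:
  "\<exists>H. continuous_on {0..1} H
      \<and> (\<forall>s\<in>{0<..<1} - {x}. (H has_real_derivative regular_part n x s) (at s))
      \<and> H 1 - H 0 = - pi * pv_poly n x"
proof (induction n)
  case 0
  define H where "H s = - root_weight s + (x - 1/2) * arcsin (2 * s - 1)" for s
  have "continuous_on {0..1} H"
    unfolding H_def[abs_def] by (intro continuous_intros continuous_on_root_weight) auto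
  moreover have "(H has_real_derivative regular_part 0 x s) (at s)" if s: "s \<in> {0<..<1} - {x}" for s
  proof -
    have "(H has_real_derivative - ((1 - 2 * s) / (2 * root_weight s)) + (x - 1/2) * (1 / root_weight s)) (at s)"
      unfolding H_def[abs_def] using s
      by (intro derivative_intros DERIV_root_weight DERIV_arcsin_affine DERIV_cmult) auto
    moreover have "- ((1 - 2 * s) / (2 * root_weight s)) + (x - 1/2) * (1 / root_weight s) = regular_part 0 x s"
    proof -
      have "u / (x - s) - x * (1 - x) / ((x - s) * u) = (s + x - 1) / u"
        if "u \<noteq> 0" "u * u = s * (1 - s)" for u
      proof -
        have "u / (x - s) - x * (1 - x) / ((x - s) * u) = (u * u - x * (1 - x)) / ((x - s) * u)"
          using that(1) by (simp add: diff_divide_distrib)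
        also have "u * u - x * (1 - x) = (x - s) * (s + x - 1)"
          using that(2) by algebra
        finally show ?thesis using s by simp
      qed
      moreover have "root_weight s > 0" "root_weight s * root_weight s = s * (1 - s)"
        using s root_weight_pos root_weight_square by auto
      ultimately have closed_form: "regular_part 0 x s = (s + x - 1) / root_weight s"
        by (simp add: regular_part_def jacobi_weight_def)
      show ?thesis
        unfolding closed_form using \<open>root_weight s > 0\<close> by (simp add: field_simps)
    qed
    ultimately show ?thesis by simp
  qed
  moreover have "H 1 - H 0 = - pi * pv_poly 0 x"
    by (simp add: H_def root_weight_endpoints pv_poly_def pv_coeff_def algebra_simps)
  ultimately show ?case by blast
next
  case (Suc n)
  then obtain H where cont_H: "continuous_on {0..1} H"
    and deriv_H: "\<forall>s\<in>{0<..<1} - {x}. (H has_real_derivative regular_part n x s) (at s)"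
    and incr_H: "H 1 - H 0 = - pi * pv_poly n x" by blast
  obtain \<Phi> where cont_\<Phi>: "continuous_on {0..1} \<Phi>"
    and deriv_\<Phi>: "\<forall>s\<in>{0<..<1}. (\<Phi> has_real_derivative jacobi_weight n s) (at s)"
    and incr_\<Phi>: "\<Phi> 1 - \<Phi> 0 = jacobi_mass n" using jacobi_weight_primitive by blast
  text \<open>Since (1-s)/(x-s) = 1 + (1-x)/(x-s), the next regular part is f_n plus (1-x) times this one.\<close>
  define G where "G s = \<Phi> s + (1 - x) * H s" for s
  have "continuous_on {0..1} G"
    unfolding G_def[abs_def] by (intro continuous_intros cont_\<Phi> cont_H)
  moreover have "(G has_real_derivative regular_part (Suc n) x s) (at s)" if s: "s \<in> {0<..<1} - {x}" for s
  proof -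
    have "(G has_real_derivative jacobi_weight n s + (1 - x) * regular_part n x s) (at s)"
      unfolding G_def[abs_def] using s deriv_\<Phi> deriv_H
      by (intro derivative_intros DERIV_add DERIV_cmult) auto
    moreover have "jacobi_weight n s + (1 - x) * regular_part n x s = regular_part (Suc n) x s"
    proof -
      have "x - s \<noteq> 0" using s by auto
      then show ?thesis unfolding regular_part_def by (simp add: jacobi_weight_Suc field_simps)
    qed
    ultimately show ?thesis by simp
  qed
  moreover have "G 1 - G 0 = - pi * pv_poly (Suc n) x"
  proof -
    have "G 1 - G 0 = (\<Phi> 1 - \<Phi> 0) + (1 - x) * (H 1 - H 0)" by (simp add: G_def algebra_simps)
    then show ?thesis using incr_\<Phi> incr_H by (simp add: pv_poly_Suc algebra_simps)
  qed
  ultimately show ?case by blast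
qed

lemma has_pv_integral_from_primitive:
  fixes G g :: "real \<Rightarrow> real"
  assumes ax: "a < x" and xb: "x < b"
    and cont: "continuous_on ({a..b} - {x}) G"
    and deriv: "\<And>s. s \<in> {a<..<b} - {x} \<Longrightarrow> (G has_real_derivative g s) (at s)"
    and jump: "((\<lambda>e. G (x - e) - G (x + e)) \<longlongrightarrow> L) (at_right 0)"
  shows "has_pv_integral g a b x (G b - G a + L)"
proof -
  have truncated: "G b - G a + (G (x - e) - G (x + e)) = integral {a..x-e} g + integral {x+e..b} g"
    if e: "0 < e" "e < min (x - a) (b - x)" for e
  proof -
    have "(g has_integral G (x - e) - G a) {a..x-e}"
    proof (rule fundamental_theorem_of_calculus_interior)
      show "continuous_on {a..x-e} G" by (rule continuous_on_subset[OF cont]) (use e in auto)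
      show "(G has_vector_derivative g s) (at s)" if "s \<in> {a<..<x-e}" for s
        using deriv[of s] that e by (simp add: has_real_derivative_iff_has_vector_derivative)
    qed (use e in auto)
    moreover have "(g has_integral G b - G (x + e)) {x+e..b}"
    proof (rule fundamental_theorem_of_calculus_interior)
      show "continuous_on {x+e..b} G" by (rule continuous_on_subset[OF cont]) (use e in auto)
      show "(G has_vector_derivative g s) (at s)" if "s \<in> {x+e<..<b}" for s
        using deriv[of s] that e by (simp add: has_real_derivative_iff_has_vector_derivative)
    qed (use e in auto)
    ultimately show ?thesis by (simp add: integral_unique)
  qed
  have "((\<lambda>e. G b - G a + (G (x - e) - G (x + e))) \<longlongrightarrow> G b - G a + L) (at_right 0)"
    by (intro tendsto_intros jump)
  moreover have "eventually (\<lambda>e. G b - G a + (G (x - e) - G (x + e))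
      = integral {a..x-e} g + integral {x+e..b} g) (at_right 0)"
    unfolding eventually_at_right_field
    by (rule exI[of _ "min (x - a) (b - x)"]) (use ax xb truncated in auto)
  ultimately show ?thesis
    unfolding has_pv_integral_def by (rule Lim_transform_eventually)
qed

lemma symmetric_jump_tendsto_zero:
  fixes f :: "real \<Rightarrow> real"
  assumes "isCont f x"
  shows "((\<lambda>e. f (x - e) - f (x + e)) \<longlongrightarrow> 0) (at_right 0)"
proof -
  have "((\<lambda>e. x - e) \<longlongrightarrow> x) (at_right 0)" "((\<lambda>e. x + e) \<longlongrightarrow> x) (at_right 0)"
    by (auto intro!: tendsto_eq_intros)
  then have "((\<lambda>e. f (x - e) - f (x + e)) \<longlongrightarrow> f x - f x) (at_right 0)"
    by (intro tendsto_diff isCont_tendsto_compose[OF assms])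
  then show ?thesis by simp
qed

lemma DERIV_ln_dist:
  fixes x s :: real
  assumes "s \<noteq> x"
  shows "((\<lambda>s. ln \<bar>x - s\<bar>) has_real_derivative 1 / (s - x)) (at s)"
proof (cases "s < x")
  case True
  have "((\<lambda>s. ln (x - s)) has_real_derivative 1 / (s - x)) (at s)"
    using True by (auto intro!: derivative_eq_intros simp: divide_simps)
  then show ?thesis
    by (rule has_field_derivative_transform_within_open[where S="{..<x}"]) (use True in auto)
next
  case False
  then have "x < s" using assms by simp
  have "((\<lambda>s. ln (s - x)) has_real_derivative 1 / (s - x)) (at s)"
    using \<open>x < s\<close> by (auto intro!: derivative_eq_intros)
  then show ?thesis
    by (rule has_field_derivative_transform_within_open[where S="{x<..}"]) (use \<open>x < s\<close> in auto)
qed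

text \<open>The singular kernel 1/((x-s) u(s)) has the primitive (ln M(s) - ln|x-s|)/u(x) with
  M(s) = x + s - 2xs + 2 u(x) u(s) > 0; it vanishes at both endpoints and the logarithmic
  singularities cancel in the symmetric jump, i.e. PV int_0^1 ds/((x-s) u(s)) = 0.\<close>
lemma cauchy_kernel_primitive:
  assumes x: "0 < x" "x < 1"
  shows "\<exists>L. continuous_on ({0..1} - {x}) L
      \<and> (\<forall>s\<in>{0<..<1} - {x}. (L has_real_derivative 1 / ((x - s) * root_weight s)) (at s))
      \<and> L 0 = 0 \<and> L 1 = 0
      \<and> ((\<lambda>e. L (x - e) - L (x + e)) \<longlongrightarrow> 0) (at_right 0)"
proof -
  define w where "w = root_weight x"
  define M where "M s = x + s - 2 * x * s + 2 * w * root_weight s" for s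
  define L where "L s = (ln (M s) - ln \<bar>x - s\<bar>) / w" for s
  have w: "w > 0" "w * w = x * (1 - x)"
    using x root_weight_pos root_weight_square by (auto simp: w_def)
  have M_pos: "M s > 0" if "s \<in> {0..1}" for s
  proof -
    have "x * (1 - s) + s * (1 - x) > 0"
      using x that by (cases "s < 1") (auto simp: add_pos_nonneg add_nonneg_pos)
    moreover have "w * root_weight s \<ge> 0" using w that by (simp add: root_weight_def)
    ultimately show ?thesis by (simp add: M_def algebra_simps)
  qed
  have "\<forall>s\<in>{0..1}. x + s - 2 * x * s + 2 * w * root_weight s \<noteq> 0"
    using M_pos unfolding M_def by force
  then have cont_lnM: "continuous_on {0..1} (\<lambda>s. ln (M s))"
    unfolding M_def by (intro continuous_intros continuous_on_root_weight)
  have "continuous_on ({0..1} - {x}) (\<lambda>s. ln (M s))"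
    by (rule continuous_on_subset[OF cont_lnM]) auto
  moreover have "continuous_on ({0..1} - {x}) (\<lambda>s. ln \<bar>x - s\<bar>)"
    by (intro continuous_intros) auto
  ultimately have "continuous_on ({0..1} - {x}) L"
    unfolding L_def using w by (intro continuous_on_divide continuous_on_diff continuous_on_const) auto
  moreover have "(L has_real_derivative 1 / ((x - s) * root_weight s)) (at s)"
    if s: "s \<in> {0<..<1} - {x}" for s
  proof -
    define u where "u = root_weight s"
    have u: "u > 0" "u * u = s * (1 - s)" using s root_weight_pos root_weight_square by (auto simp: u_def)
    have "(M has_real_derivative 1 - 2 * x + 2 * w * ((1 - 2 * s) / (2 * u))) (at s)"
      unfolding M_def[abs_def] u_def using s
      by (auto intro!: derivative_eq_intros DERIV_root_weight)
    moreover have "0 < M s" using s M_pos by simp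
    ultimately have "((\<lambda>s. ln (M s)) has_real_derivative 1 / M s * (1 - 2 * x + 2 * w * ((1 - 2 * s) / (2 * u)))) (at s)"
      using DERIV_chain2[OF DERIV_ln_divide] by blast
    then have "(L has_real_derivative
        (1 / M s * (1 - 2 * x + 2 * w * ((1 - 2 * s) / (2 * u))) - 1 / (s - x)) / w) (at s)"
      unfolding L_def[abs_def] using s by (intro DERIV_cdivide DERIV_diff DERIV_ln_dist) auto
    moreover have "(1 / M s * (1 - 2 * x + 2 * w * ((1 - 2 * s) / (2 * u))) - 1 / (s - x)) / w
        = 1 / ((x - s) * u)"
    proof -
      text \<open>The identity behind the derivative, polynomial once u^2 and w^2 are substituted.\<close>
      have key: "(x - s) * ((1 - 2 * x) * u + w * (1 - 2 * s)) + M s * u = w * M s"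
        unfolding M_def u_def[symmetric] using u(2) w(2) by algebra
      have nz: "x - s \<noteq> 0" "M s \<noteq> 0" using s M_pos[of s] by auto
      have "1 - 2 * x + 2 * w * ((1 - 2 * s) / (2 * u)) = ((1 - 2 * x) * u + w * (1 - 2 * s)) / u"
        using u(1) by (simp add: field_simps)
      then have "1 / M s * (1 - 2 * x + 2 * w * ((1 - 2 * s) / (2 * u))) - 1 / (s - x)
          = ((x - s) * ((1 - 2 * x) * u + w * (1 - 2 * s)) + M s * u) / ((x - s) * u * M s)"
        using u(1) nz by (simp add: field_simps)
      also have "\<dots> = w / ((x - s) * u)"
        using nz by (simp only: key) simp
      finally show ?thesis using w(1) by simp
    qed
    ultimately show ?thesis by (simp add: u_def)
  qed
  moreover have "L 0 = 0" "L 1 = 0"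
    using x by (simp_all add: L_def M_def root_weight_endpoints)
  moreover have "((\<lambda>e. L (x - e) - L (x + e)) \<longlongrightarrow> 0) (at_right 0)"
  proof -
    have "isCont (\<lambda>s. ln (M s)) x"
      using continuous_on_interior[OF cont_lnM] x by simp
    then have "((\<lambda>e. (ln (M (x - e)) - ln (M (x + e))) / w) \<longlongrightarrow> 0 / w) (at_right 0)"
      by (intro tendsto_divide symmetric_jump_tendsto_zero tendsto_const) (use w in auto)
    then show ?thesis by (simp add: L_def diff_divide_distrib)
  qed
  ultimately show ?thesis by blast
qed

lemma jacobi_weight_pv:
  assumes x: "0 < x" "x < 1"
    and g: "\<And>s. s \<in> {0<..<1} \<Longrightarrow> g s = K * jacobi_weight n s / (x - s)"
  shows "has_pv_integral g 0 1 x (- K * pi * pv_poly n x)"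
proof -
  obtain H where cont_H: "continuous_on {0..1} H"
    and deriv_H: "\<forall>s\<in>{0<..<1} - {x}. (H has_real_derivative regular_part n x s) (at s)"
    and incr_H: "H 1 - H 0 = - pi * pv_poly n x"
    using regular_part_primitive by blast
  obtain L where cont_L: "continuous_on ({0..1} - {x}) L"
    and deriv_L: "\<forall>s\<in>{0<..<1} - {x}. (L has_real_derivative 1 / ((x - s) * root_weight s)) (at s)"
    and ends_L: "L 0 = 0" "L 1 = 0"
    and jump_L: "((\<lambda>e. L (x - e) - L (x + e)) \<longlongrightarrow> 0) (at_right 0)"
    using cauchy_kernel_primitive[OF x] by blast
  define c where "c = x * (1 - x) ^ (n + 1)"
  define G where "G s = K * (H s + c * L s)" for s
  have "has_pv_integral g 0 1 x (G 1 - G 0 + 0)"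
  proof (rule has_pv_integral_from_primitive)
    show "continuous_on ({0..1} - {x}) G"
      unfolding G_def[abs_def] using continuous_on_subset[OF cont_H] cont_L
      by (intro continuous_intros) auto
    show "(G has_real_derivative g s) (at s)" if s: "s \<in> {0<..<1} - {x}" for s
    proof -
      have "(G has_real_derivative K * (regular_part n x s + c * (1 / ((x - s) * root_weight s)))) (at s)"
        unfolding G_def[abs_def] using s deriv_H deriv_L
        by (intro DERIV_cmult DERIV_add) auto
      moreover have "K * (regular_part n x s + c * (1 / ((x - s) * root_weight s))) = g s"
        using g[of s] s by (simp add: regular_part_def c_def)
      ultimately show ?thesis by simp
    qed
    have "isCont H x" using continuous_on_interior[OF cont_H] x by simp
    then have "((\<lambda>e. K * ((H (x - e) - H (x + e)) + c * (L (x - e) - L (x + e)))) \<longlongrightarrow> K * (0 + c * 0)) (at_right 0)"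
      by (intro tendsto_intros symmetric_jump_tendsto_zero jump_L)
    then show "((\<lambda>e. G (x - e) - G (x + e)) \<longlongrightarrow> 0) (at_right 0)"
      by (simp add: G_def algebra_simps)
  qed (use x in auto)
  moreover have "G 1 - G 0 = K * (H 1 - H 0)"
    using ends_L by (simp add: G_def algebra_simps)
  ultimately show ?thesis using incr_H by (simp add: mult.assoc)
qed

definition psi_scale :: "nat \<Rightarrow> real" where
  "psi_scale k = - (fact (2 * k + 2) / (pi * pochhammer (-1/2) (2 * k + 2)))"

lemma psi_eq_jacobi_weight:
  assumes "s \<in> {0..1}"
  shows "psi k s = psi_scale k * jacobi_weight (2 * k) s"
proof -
  have s: "0 \<le> s" "s \<le> 1" using assms by auto
  have "(1 - s) powr (real (2 * k) + 1/2) = (1 - s) ^ (2 * k) * sqrt (1 - s)"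
  proof (cases "s = 1")
    case False
    then have "1 - s > 0" using s by simp
    then show ?thesis by (simp add: powr_add powr_realpow[symmetric] powr_half_sqrt)
  qed simp
  moreover have "s powr (1/2) = sqrt s" using s by (simp add: powr_half_sqrt)
  ultimately show ?thesis
    by (simp add: psi_def psi_scale_def jacobi_weight_def root_weight_def mult_ac)
qed

text \<open>(-1/2)_{n+1} = (-1/2) (1/2)_n is negative, so psi_scale k is positive.\<close>
lemma pochhammer_minus_half_neg: "pochhammer (-1/2 :: real) (Suc n) < 0"
proof -
  have "pochhammer (-1/2 :: real) (Suc n) = (-1/2) * pochhammer (1/2) n"
    using pochhammer_rec[of "-1/2 :: real" n] by simp
  moreover have "pochhammer (1/2 :: real) n > 0" by (rule pochhammer_pos) simp
  ultimately show ?thesis by simp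
qed

lemma psi_scale_pos: "psi_scale k > 0"
  using pochhammer_minus_half_neg[of "2 * k + 1"] pi_gt_zero
  by (simp add: psi_scale_def divide_pos_neg mult_pos_neg)

lemma psi_scale_mass: "psi_scale k * jacobi_mass (2 * k) = 1"
proof -
  have "- (F / (pi * P)) * (- pi * P / F) = 1" if "F \<noteq> 0" "P \<noteq> 0" for F P :: real
    using that by (simp add: field_simps)
  from this[of "fact (2 * k + 2)" "pochhammer (-1/2) (2 * k + 2)"]
  show ?thesis
    using pochhammer_minus_half_neg[of "2 * k + 1"] by (simp add: psi_scale_def jacobi_mass_def)
qed

lemma V_derivative:
  "(V k has_real_derivative - 2 * pi * psi_scale k * pv_poly (2 * k) x) (at x)"
proof -
  define C where "C = 2 * (fact (2 * k + 2) / pochhammer (-1/2) (2 * k + 2) :: real)"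
  define c where "c l = (-1) ^ l * pochhammer (real l + 1/2) (2 * k + 1 - l)
      / (fact (2 * k + 1 - l) * (real l + 1))" for l
  have V_eq: "V k = (\<lambda>x. C * (\<Sum>l = 0..2 * k + 1. c l * x ^ (l + 1)))"
    by (simp add: V_def C_def c_def fun_eq_iff)
  have "((\<lambda>x. x ^ (l + 1)) has_real_derivative real (l + 1) * x ^ l) (at x)" for l
    using DERIV_pow[of "l + 1" x] by simp
  then have derivative: "((\<lambda>x. C * (\<Sum>l = 0..2 * k + 1. c l * x ^ (l + 1))) has_real_derivative
      C * (\<Sum>l = 0..2 * k + 1. c l * (real (l + 1) * x ^ l))) (at x)"
    by (intro DERIV_cmult DERIV_sum)
  have coeff: "c l * (real (l + 1) * x ^ l) = pv_coeff (2 * k) l * x ^ l" for l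
  proof -
    have cancel: "a / (b * r) * (r * y) = a / b * y" if "r \<noteq> 0" for a b r y :: real
      using that by (cases "b = 0") (simp_all add: field_simps)
    show ?thesis
      unfolding c_def pv_coeff_def of_nat_add of_nat_1 by (rule cancel) simp
  qed
  have "C = - 2 * pi * psi_scale k"
    using pi_gt_zero by (simp add: C_def psi_scale_def)
  then have derivative_value: "C * (\<Sum>l = 0..2 * k + 1. c l * (real (l + 1) * x ^ l))
      = - 2 * pi * psi_scale k * pv_poly (2 * k) x"
    by (simp only: coeff pv_poly_def)
  show ?thesis using derivative unfolding V_eq derivative_value .
qed

theorem mainTheorem1:
  fixes k :: nat
  shows "(\<forall>x\<in>{0<..<1}. psi k x > 0)
    \<and> (psi k has_integral 1) {0..1}
    \<and> (\<forall>x\<in>{0<..<1}. \<exists>I. has_pv_integral (\<lambda>s. psi k s / (x - s)) 0 1 x I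
                          \<and> 2 * I = deriv (V k) x)"
proof (intro conjI ballI)
  fix x :: real assume "x \<in> {0<..<1}"
  then show "psi k x > 0"
    using psi_eq_jacobi_weight[of x] psi_scale_pos root_weight_pos
    by (simp add: jacobi_weight_def)
next
  have "((\<lambda>s. psi_scale k * jacobi_weight (2 * k) s) has_integral psi_scale k * jacobi_mass (2 * k)) {0..1}"
    by (rule has_integral_mult_right[OF jacobi_weight_integral])
  then have "((\<lambda>s. psi_scale k * jacobi_weight (2 * k) s) has_integral 1) {0..1}"
    by (simp only: psi_scale_mass)
  then show "(psi k has_integral 1) {0..1}"
    by (rule has_integral_eq[rotated]) (simp add: psi_eq_jacobi_weight)
next
  fix x :: real assume x: "x \<in> {0<..<1}"
  have "has_pv_integral (\<lambda>s. psi k s / (x - s)) 0 1 x (- psi_scale k * pi * pv_poly (2 * k) x)"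
    using x psi_eq_jacobi_weight by (intro jacobi_weight_pv) auto
  moreover have "deriv (V k) x = - 2 * pi * psi_scale k * pv_poly (2 * k) x"
    by (rule DERIV_imp_deriv[OF V_derivative])
  ultimately show "\<exists>I. has_pv_integral (\<lambda>s. psi k s / (x - s)) 0 1 x I \<and> 2 * I = deriv (V k) x"
    by (intro exI[of _ "- psi_scale k * pi * pv_poly (2 * k) x"] conjI) simp_all
qed

end
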